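(* Let $(L,\wedge,\vee,0,1)$ be a bounded lattice with additive Nakano mosaic $(L,\boxplus,0)$, where $x\boxplus y:=\{z\in L\mid x\vee y=x\vee z=z\vee y\}$. Then for all $x,y\in L$, \[ (x\boxplus(x\boxplus y))\cap((x\boxplus y)\boxplus y)\subseteq x\boxplus y. \]
   Context: For $u\in L$ and subsets $X,Y\subseteq L$, $u\boxplus X:=\bigcup_{v\in X}u\boxplus v$ and $X\boxplus u:=\bigcup_{v\in X}v\boxplus u$. *)

theory Defs
  imports Main
begin

definition nplus :: "'a::bounded_lattice \<Rightarrow> 'a \<Rightarrow> 'a set" where
  "nplus x y = {z. sup x y = sup x z \<and> sup x z = sup z y}"

definition nplus_left :: "'a::bounded_lattice \<Rightarrow> 'a set \<Rightarrow> 'a set" where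
  "nplus_left u X = (\<Union>v\<in>X. nplus u v)"

definition nplus_right :: "'a::bounded_lattice set \<Rightarrow> 'a \<Rightarrow> 'a set" where
  "nplus_right X u = (\<Union>v\<in>X. nplus v u)"

end

theory Submission
  imports Defs
begin

lemma mem_nplus_iff:
  "z \<in> nplus x y \<longleftrightarrow> sup x z = sup x y \<and> sup z y = sup x y"
  unfolding nplus_def by auto

lemma sup_eq_if_mem_nplus_left_nplus:
  assumes "z \<in> nplus_left x (nplus x y)"
  shows "sup x z = sup x y"
proof -
  obtain v where "v \<in> nplus x y" and "z \<in> nplus x v"
    using assms by (auto simp: nplus_left_def)
  then show ?thesis by (simp add: mem_nplus_iff)
qed

lemma sup_eq_if_mem_nplus_right_nplus:
  assumes "z \<in> nplus_right (nplus x y) y"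
  shows "sup z y = sup x y"
proof -
  obtain w where "w \<in> nplus x y" and "z \<in> nplus w y"
    using assms by (auto simp: nplus_right_def)
  then show ?thesis by (simp add: mem_nplus_iff)
qed

theorem mainTheorem15:
  fixes x y :: "'a::bounded_lattice"
  shows "nplus_left x (nplus x y) \<inter> nplus_right (nplus x y) y \<subseteq> nplus x y"
  by (auto simp: mem_nplus_iff
      dest: sup_eq_if_mem_nplus_left_nplus sup_eq_if_mem_nplus_right_nplus)

end
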